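(* Let $(X,\le)$ be a bicontinuous poset and let $C\subseteq X$ be a countable subset that is dense in the interval topology. Then: (i) the collection $\{(a,b): a,b\in C,\ a\ll b\}$ is a countable basis for the interval topology; thus separability of the interval topology implies second countability, and even complete metrizability if $X$ is globally hyperbolic; (ii) for every $x\in X$, the set $\Downarrow x\cap C$ contains a directed set with supremum $x$, and $\Uparrow x\cap C$ contains a filtered set with infimum $x$.
   Context: For a poset $(P,\sqsubseteq)$: a nonempty $S\subseteq P$ is directed if any two elements of $S$ have an upper bound in $S$, and filtered if any two elements of $S$ have a lower bound in $S$; $\bigsqcup S$ and $\bigwedge S$ denote supremum and infimum when they exist. For $x,y\in P$, $x\ll y$ iff for every directed $S\subseteq P$ that has a supremum, $y\sqsubseteq\bigsqcup S$ implies $x\sqsubseteq s$ for some $s\in S$. Put $\Downarrow x=\{a: a\ll x\}$, $\Uparrow x=\{a: x\ll a\}$. A basis of $P$ is a subset $B$ such that for every $x$, $B\cap\Downarrow x$ contains a directed set with supremum $x$; $P$ is continuous if it has a basis. A continuous poset $P$ is bicontinuous if (1) for all $x,y$: $x\ll y$ iff for every filtered $S\subseteq P$ having an infimum, $\bigwedge S\sqsubseteq x$ implies $s\sqsubseteq y$ for some $s\in S$; and (2) for every $x$, $\Uparrow x$ is filtered with infimum $x$. On a bicontinuous poset the sets $(a,b)=\{x: a\ll x\ll b\}$ form a basis for a topology, the interval topology. A globally hyperbolic poset is a bicontinuous poset $(X,\le)$ in which every closed interval $[a,b]=\{x: a\le x\le b\}$ is compact in the interval topology. *)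

theory Defs
  imports "HOL-Analysis.Analysis"
begin

definition directed :: "'a::order set \<Rightarrow> bool" where
  "directed S \<longleftrightarrow> S \<noteq> {} \<and> (\<forall>x\<in>S. \<forall>y\<in>S. \<exists>z\<in>S. x \<le> z \<and> y \<le> z)"

definition filtered :: "'a::order set \<Rightarrow> bool" where
  "filtered S \<longleftrightarrow> S \<noteq> {} \<and> (\<forall>x\<in>S. \<forall>y\<in>S. \<exists>z\<in>S. z \<le> x \<and> z \<le> y)"

definition is_sup :: "'a::order set \<Rightarrow> 'a \<Rightarrow> bool" where
  "is_sup S s \<longleftrightarrow> (\<forall>x\<in>S. x \<le> s) \<and> (\<forall>u. (\<forall>x\<in>S. x \<le> u) \<longrightarrow> s \<le> u)"

definition is_inf :: "'a::order set \<Rightarrow> 'a \<Rightarrow> bool" where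
  "is_inf S s \<longleftrightarrow> (\<forall>x\<in>S. s \<le> x) \<and> (\<forall>u. (\<forall>x\<in>S. u \<le> x) \<longrightarrow> u \<le> s)"

definition way_below :: "'a::order \<Rightarrow> 'a \<Rightarrow> bool" where
  "way_below x y \<longleftrightarrow>
     (\<forall>S s. directed S \<and> is_sup S s \<and> y \<le> s \<longrightarrow> (\<exists>d\<in>S. x \<le> d))"

definition ddown :: "'a::order \<Rightarrow> 'a set" where
  "ddown x = {a. way_below a x}"

definition uup :: "'a::order \<Rightarrow> 'a set" where
  "uup x = {a. way_below x a}"

definition is_basis :: "'a::order set \<Rightarrow> bool" where
  "is_basis B \<longleftrightarrow> (\<forall>x. \<exists>S. S \<subseteq> B \<inter> ddown x \<and> directed S \<and> is_sup S x)"

definition continuous_poset :: "'a::order itself \<Rightarrow> bool" where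
  "continuous_poset _ \<longleftrightarrow> (\<exists>B::'a set. is_basis B)"

definition bicontinuous :: "'a::order itself \<Rightarrow> bool" where
  "bicontinuous T \<longleftrightarrow> continuous_poset T \<and>
     (\<forall>x y::'a. way_below x y \<longleftrightarrow>
        (\<forall>S i. filtered S \<and> is_inf S i \<and> i \<le> x \<longrightarrow> (\<exists>s\<in>S. s \<le> y))) \<and>
     (\<forall>x::'a. filtered (uup x) \<and> is_inf (uup x) x)"

definition open_interval :: "'a::order \<Rightarrow> 'a \<Rightarrow> 'a set" where
  "open_interval a b = {x. way_below a x \<and> way_below x b}"

definition interval_topology :: "'a::order topology" where
  "interval_topology = topology_generated_by {open_interval a b | a b. True}"

definition globally_hyperbolic :: "'a::order itself \<Rightarrow> bool" where
  "globally_hyperbolic T \<longleftrightarrow> bicontinuous T \<and>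
     (\<forall>a b::'a. compactin interval_topology {x. a \<le> x \<and> x \<le> b})"

end

theory Submission
  imports Defs
begin

text \<open>
  In a continuous poset the way-below relation interpolates, so every interval \<open>(a, b)\<close> with
  \<open>a \<ll> b\<close> is nonempty and open, hence meets the dense set \<open>C\<close>. Shrinking a basic
  neighbourhood \<open>(a, b)\<close> of \<open>x\<close> to \<open>(c, d)\<close> with \<open>a \<ll> c \<ll> x \<ll> d \<ll> b\<close> and
  \<open>c, d \<in> C\<close> gives the countable base; by the same argument \<open>\<Down>x \<inter> C\<close> is cofinal in
  \<open>\<Down>x\<close> (and \<open>\<Up>x \<inter> C\<close> coinitial in \<open>\<Up>x\<close>), which transfers directedness and the supremum.
  The interval topology is Hausdorff: if \<open>\<not> x \<le> y\<close> pick \<open>a \<ll> x\<close> with \<open>\<not> a \<le> y\<close> and then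
  \<open>y \<ll> b\<close> with \<open>\<not> a \<le> b\<close>. Under global hyperbolicity it is locally compact, hence regular,
  and Urysohn's metrization theorem (countably many Urysohn functions embed it into a countable
  power of \<open>[0, 1]\<close>) makes it metrizable, so completely metrizable by local compactness.
\<close>

section \<open>Urysohn metrization\<close>

lemma embedding_map_into_cube:
  fixes F :: "'i \<Rightarrow> 'a \<Rightarrow> real"
  assumes cont: "\<And>p. p \<in> P \<Longrightarrow> continuous_map X (top_of_set {0..1::real}) (F p)"
    and sep: "\<And>W x. openin X W \<Longrightarrow> x \<in> W \<Longrightarrow>
                \<exists>p\<in>P. F p x = 0 \<and> (\<forall>y\<in>topspace X. F p y < 1 \<longrightarrow> y \<in> W)"
    and "t1_space X"
  shows "embedding_map X (product_topology (\<lambda>_. top_of_set {0..1}) P) (\<lambda>x. \<lambda>p\<in>P. F p x)"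
proof -
  define Y where "Y = product_topology (\<lambda>_. top_of_set {0..1::real}) P"
  define e where "e = (\<lambda>x. \<lambda>p\<in>P. F p x)"
  have cont_e: "continuous_map X Y e"
    unfolding Y_def e_def continuous_map_componentwise using cont by auto
  have "e x \<noteq> e y" if x: "x \<in> topspace X" and y: "y \<in> topspace X" "x \<noteq> y" for x y
  proof -
    have "openin X (topspace X - {y})"
      using \<open>t1_space X\<close> y by (simp add: openin_diff t1_space_closedin_singleton)
    moreover have "x \<in> topspace X - {y}"
      using x y by blast
    ultimately obtain p where "p \<in> P" "F p x = 0" "\<not> F p y < 1"
      using sep y by blast
    then have "e x p \<noteq> e y p"
      by (simp add: e_def)
    then show ?thesis
      by metis
  qed
  then have "inj_on e (topspace X)"
    by (meson inj_onI)
  then obtain e' where e': "\<And>x. x \<in> topspace X \<Longrightarrow> e' (e x) = x"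
    by (metis inv_into_f_f)
  have "continuous_map (subtopology Y (e ` topspace X)) X e'"
  proof (clarsimp simp add: continuous_map_atin limitin_atin openin_subtopology_alt e')
    fix x U
    assume x: "x \<in> topspace X" and "openin X U" "x \<in> U"
    then obtain p where p: "p \<in> P" "F p x = 0" "\<forall>y\<in>topspace X. F p y < 1 \<longrightarrow> y \<in> U"
      using sep by blast
    define W where "W = {z \<in> topspace Y. z p \<in> {0..<1}}"
    have "openin (top_of_set {0..1}) {0..<1::real}"
      using open_real_greaterThanLessThan[of "-1" 1] by (force simp: openin_open)
    then have "openin Y W"
      unfolding W_def Y_def
      by (rule openin_continuous_map_preimage[OF continuous_map_product_projection[OF p(1)]])
    moreover have "e x \<in> W"
      using continuous_map_image_subset_topspace[OF cont_e] x p by (auto simp: W_def e_def)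
    moreover have "e' ` (e ` topspace X \<inter> W - {e x}) \<subseteq> U"
      using p e' unfolding W_def e_def by auto
    ultimately show "\<exists>W. openin Y W \<and> e x \<in> W \<and> e' ` (e ` topspace X \<inter> W - {e x}) \<subseteq> U"
      by blast
  qed
  with cont_e e' have "homeomorphic_maps X (subtopology Y (e ` topspace X)) e e'"
    by (auto simp: homeomorphic_maps_def continuous_map_in_subtopology)
  then show ?thesis
    unfolding embedding_map_def Y_def e_def using homeomorphic_map_maps by blast
qed

lemma regular_space_obtain_base_closure_subset:
  assumes "regular_space X" and open_\<B>: "\<And>V. V \<in> \<B> \<Longrightarrow> openin X V"
    and base: "\<And>U x. openin X U \<Longrightarrow> x \<in> U \<Longrightarrow> \<exists>V\<in>\<B>. x \<in> V \<and> V \<subseteq> U"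
    and "openin X W" "x \<in> W"
  obtains U V where "U \<in> \<B>" "V \<in> \<B>" "x \<in> U" "X closure_of U \<subseteq> V" "V \<subseteq> W"
proof -
  obtain V where V: "V \<in> \<B>" "x \<in> V" "V \<subseteq> W"
    using base assms(4,5) by blast
  have "neighbourhood_base_of (closedin X) X"
    using \<open>regular_space X\<close> by (simp add: neighbourhood_base_of_closedin)
  then obtain U0 C where U0: "openin X U0" "x \<in> U0" "U0 \<subseteq> C" and C: "closedin X C" "C \<subseteq> V"
    using open_\<B>[OF V(1)] V(2) unfolding neighbourhood_base_of by (elim allE impE) blast+
  obtain U where U: "U \<in> \<B>" "x \<in> U" "U \<subseteq> U0"
    using base[OF U0(1,2)] by blast
  have "X closure_of U \<subseteq> C"
    using U(3) U0(3) C(1) by (intro closure_of_minimal) auto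
  with C(2) U V show thesis
    by (intro that[of U V]) auto
qed

lemma regular_second_countable_obtains_separating_functions:
  assumes "regular_space X" and "second_countable X"
  obtains P and F :: "'a set \<times> 'a set \<Rightarrow> 'a \<Rightarrow> real"
  where "countable P" "\<And>p. p \<in> P \<Longrightarrow> continuous_map X (top_of_set {0..1}) (F p)"
    "\<And>W x. openin X W \<Longrightarrow> x \<in> W \<Longrightarrow>
        \<exists>p\<in>P. F p x = 0 \<and> (\<forall>y\<in>topspace X. F p y < 1 \<longrightarrow> y \<in> W)"
proof -
  obtain \<B> where "countable \<B>" and open_\<B>: "\<And>V. V \<in> \<B> \<Longrightarrow> openin X V"
    and base: "\<And>U x. openin X U \<Longrightarrow> x \<in> U \<Longrightarrow> \<exists>V\<in>\<B>. x \<in> V \<and> V \<subseteq> U"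
    using \<open>second_countable X\<close> unfolding second_countable_def by metis
  have "normal_space X"
    using assms regular_Lindelof_imp_normal_space second_countable_imp_Lindelof_space by blast
  define P where "P = {(U, V) \<in> \<B> \<times> \<B>. X closure_of U \<subseteq> V}"
  have "countable P"
    by (rule countable_subset[of _ "\<B> \<times> \<B>"]) (auto simp: P_def \<open>countable \<B>\<close>)
  have "\<exists>f. continuous_map X (top_of_set {0..1::real}) f \<and>
            f ` (X closure_of fst p) \<subseteq> {0} \<and> f ` (topspace X - snd p) \<subseteq> {1}" if "p \<in> P" for p
  proof -
    have "closedin X (topspace X - snd p)"
      using that open_\<B> by (auto simp: P_def)
    moreover have "disjnt (X closure_of fst p) (topspace X - snd p)"
      using that by (auto simp: P_def disjnt_def)
    ultimately obtain f where "continuous_map X (top_of_set {0..1::real}) f"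
      "f ` (X closure_of fst p) \<subseteq> {0}" "f ` (topspace X - snd p) \<subseteq> {1}"
      by (rule Urysohn_lemma[OF \<open>normal_space X\<close> closedin_closure_of _ _ zero_le_one])
    then show ?thesis
      by blast
  qed
  then obtain F where F: "\<And>p. p \<in> P \<Longrightarrow> continuous_map X (top_of_set {0..1::real}) (F p) \<and>
            F p ` (X closure_of fst p) \<subseteq> {0} \<and> F p ` (topspace X - snd p) \<subseteq> {1}"
    by metis
  have sep: "\<exists>p\<in>P. F p x = 0 \<and> (\<forall>y\<in>topspace X. F p y < 1 \<longrightarrow> y \<in> W)"
    if W: "openin X W" "x \<in> W" for W x
  proof -
    obtain U V where "U \<in> \<B>" "V \<in> \<B>" "x \<in> U" "X closure_of U \<subseteq> V" "V \<subseteq> W"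
      using regular_space_obtain_base_closure_subset[OF \<open>regular_space X\<close> open_\<B> base W] .
    moreover have "U \<subseteq> X closure_of U"
      using \<open>U \<in> \<B>\<close> open_\<B> by (simp add: closure_of_subset openin_subset)
    ultimately have UV: "(U, V) \<in> P" and "x \<in> X closure_of U"
      by (auto simp: P_def)
    then have "F (U, V) x = 0"
      using F[OF UV] by auto
    moreover have "y \<in> V" if "y \<in> topspace X" "F (U, V) y < 1" for y
      using F[OF UV] that by fastforce
    ultimately show ?thesis
      using UV \<open>V \<subseteq> W\<close> by blast
  qed
  show thesis
  proof (rule that[OF \<open>countable P\<close> _ sep])
    show "continuous_map X (top_of_set {0..1}) (F p)" if "p \<in> P" for p
      using F[OF that] by blast
  qed
qed

lemma regular_second_countable_imp_metrizable_space:
  assumes "regular_space X" and "second_countable X" and "t1_space X"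
  shows "metrizable_space X"
proof -
  obtain P and F :: "'a set \<times> 'a set \<Rightarrow> 'a \<Rightarrow> real"
    where "countable P" and F: "\<And>p. p \<in> P \<Longrightarrow> continuous_map X (top_of_set {0..1}) (F p)"
      and sep: "\<And>W x. openin X W \<Longrightarrow> x \<in> W \<Longrightarrow>
                  \<exists>p\<in>P. F p x = 0 \<and> (\<forall>y\<in>topspace X. F p y < 1 \<longrightarrow> y \<in> W)"
    using regular_second_countable_obtains_separating_functions[OF assms(1,2)] by blast
  have "embedding_map X (product_topology (\<lambda>_. top_of_set {0..1}) P) (\<lambda>x. \<lambda>p\<in>P. F p x)"
    using F sep \<open>t1_space X\<close> by (rule embedding_map_into_cube)
  moreover have "metrizable_space (product_topology (\<lambda>_. top_of_set {0..1::real}) P)"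
  proof -
    have "countable {p \<in> P. \<not> (\<exists>a. topspace (top_of_set {0..1::real}) \<subseteq> {a})}"
      by (rule countable_subset[OF _ \<open>countable P\<close>]) blast
    moreover have "metrizable_space (top_of_set {0..1::real})"
      by (rule metrizable_space_subtopology[OF metrizable_space_euclidean])
    ultimately show ?thesis
      unfolding metrizable_space_product_topology by blast
  qed
  ultimately show ?thesis
    using embedding_map_imp_homeomorphic_space homeomorphic_metrizable_space
      metrizable_space_subtopology by blast
qed

section \<open>Cofinal subsets\<close>

lemma cofinal_subset_directed_iff:
  fixes S T :: "'a::order set"
  assumes "S \<subseteq> T" and cofinal: "\<And>t. t \<in> T \<Longrightarrow> \<exists>s\<in>S. t \<le> s"
  shows "directed S \<longleftrightarrow> directed T"
proof
  assume S: "directed S"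
  show "directed T"
    unfolding directed_def
  proof (intro conjI ballI)
    show "T \<noteq> {}"
      using S \<open>S \<subseteq> T\<close> by (auto simp: directed_def)
    fix t1 t2 assume "t1 \<in> T" "t2 \<in> T"
    then obtain s1 s2 where "s1 \<in> S" "t1 \<le> s1" "s2 \<in> S" "t2 \<le> s2"
      using cofinal by meson
    moreover obtain s where "s \<in> S" "s1 \<le> s" "s2 \<le> s"
      using S calculation unfolding directed_def by blast
    ultimately show "\<exists>t\<in>T. t1 \<le> t \<and> t2 \<le> t"
      using \<open>S \<subseteq> T\<close> by (meson order_trans subsetD)
  qed
next
  assume T: "directed T"
  show "directed S"
    unfolding directed_def
  proof (intro conjI ballI)
    obtain t where "t \<in> T"
      using T by (auto simp: directed_def)
    then show "S \<noteq> {}"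
      using cofinal by blast
    fix s1 s2 assume "s1 \<in> S" "s2 \<in> S"
    then obtain t where "t \<in> T" "s1 \<le> t" "s2 \<le> t"
      using T \<open>S \<subseteq> T\<close> unfolding directed_def by blast
    moreover obtain s where "s \<in> S" "t \<le> s"
      using cofinal calculation(1) by blast
    ultimately show "\<exists>s\<in>S. s1 \<le> s \<and> s2 \<le> s"
      by (meson order_trans)
  qed
qed

lemma cofinal_subset_is_sup_iff:
  fixes S T :: "'a::order set"
  assumes "S \<subseteq> T" and cofinal: "\<And>t. t \<in> T \<Longrightarrow> \<exists>s\<in>S. t \<le> s"
  shows "is_sup S x \<longleftrightarrow> is_sup T x"
proof -
  have "(\<forall>s\<in>S. s \<le> u) \<longleftrightarrow> (\<forall>t\<in>T. t \<le> u)" for u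
    using assms by (meson order_trans subsetD)
  then show ?thesis
    unfolding is_sup_def by blast
qed

lemma coinitial_subset_filtered_iff:
  fixes S T :: "'a::order set"
  assumes "S \<subseteq> T" and coinitial: "\<And>t. t \<in> T \<Longrightarrow> \<exists>s\<in>S. s \<le> t"
  shows "filtered S \<longleftrightarrow> filtered T"
proof
  assume S: "filtered S"
  show "filtered T"
    unfolding filtered_def
  proof (intro conjI ballI)
    show "T \<noteq> {}"
      using S \<open>S \<subseteq> T\<close> by (auto simp: filtered_def)
    fix t1 t2 assume "t1 \<in> T" "t2 \<in> T"
    then obtain s1 s2 where "s1 \<in> S" "s1 \<le> t1" "s2 \<in> S" "s2 \<le> t2"
      using coinitial by meson
    moreover obtain s where "s \<in> S" "s \<le> s1" "s \<le> s2"
      using S calculation unfolding filtered_def by blast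
    ultimately show "\<exists>t\<in>T. t \<le> t1 \<and> t \<le> t2"
      using \<open>S \<subseteq> T\<close> by (meson order_trans subsetD)
  qed
next
  assume T: "filtered T"
  show "filtered S"
    unfolding filtered_def
  proof (intro conjI ballI)
    obtain t where "t \<in> T"
      using T by (auto simp: filtered_def)
    then show "S \<noteq> {}"
      using coinitial by blast
    fix s1 s2 assume "s1 \<in> S" "s2 \<in> S"
    then obtain t where "t \<in> T" "t \<le> s1" "t \<le> s2"
      using T \<open>S \<subseteq> T\<close> unfolding filtered_def by blast
    moreover obtain s where "s \<in> S" "s \<le> t"
      using coinitial calculation(1) by blast
    ultimately show "\<exists>s\<in>S. s \<le> s1 \<and> s \<le> s2"
      by (meson order_trans)
  qed
qed

lemma coinitial_subset_is_inf_iff: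
  fixes S T :: "'a::order set"
  assumes "S \<subseteq> T" and coinitial: "\<And>t. t \<in> T \<Longrightarrow> \<exists>s\<in>S. s \<le> t"
  shows "is_inf S x \<longleftrightarrow> is_inf T x"
proof -
  have "(\<forall>s\<in>S. u \<le> s) \<longleftrightarrow> (\<forall>t\<in>T. u \<le> t)" for u
    using assms by (meson order_trans subsetD)
  then show ?thesis
    unfolding is_inf_def by blast
qed

lemma is_sup_UN:
  fixes x :: "'a::order"
  assumes "is_sup A x" and "\<And>a. a \<in> A \<Longrightarrow> is_sup (B a) a"
  shows "is_sup (\<Union>a\<in>A. B a) x"
  unfolding is_sup_def
proof (intro conjI allI impI ballI)
  fix b assume "b \<in> (\<Union>a\<in>A. B a)"
  then obtain a where "a \<in> A" "b \<in> B a"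
    by blast
  then show "b \<le> x"
    using assms unfolding is_sup_def by (blast intro: order_trans)
next
  fix u assume "\<forall>b\<in>(\<Union>a\<in>A. B a). b \<le> u"
  then have "a \<le> u" if "a \<in> A" for a
    using assms(2)[OF that] that unfolding is_sup_def by blast
  then show "x \<le> u"
    using assms(1) unfolding is_sup_def by blast
qed

section \<open>The way-below relation\<close>

lemma way_below_imp_le:
  fixes x y :: "'a::order"
  assumes "way_below x y"
  shows "x \<le> y"
proof -
  have "directed {y}" "is_sup {y} y"
    by (auto simp: directed_def is_sup_def)
  with assms show ?thesis
    unfolding way_below_def by blast
qed

lemma way_below_mono:
  fixes a b x y :: "'a::order"
  shows "a \<le> x \<Longrightarrow> way_below x y \<Longrightarrow> y \<le> b \<Longrightarrow> way_below a b"
  unfolding way_below_def by (meson order_trans)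

lemma way_below_trans:
  fixes x y z :: "'a::order"
  shows "way_below x y \<Longrightarrow> way_below y z \<Longrightarrow> way_below x z"
  by (meson order_refl way_below_imp_le way_below_mono)

lemma
  fixes x :: "'a::order"
  assumes "continuous_poset TYPE('a)"
  shows directed_ddown: "directed (ddown x)"
    and is_sup_ddown: "is_sup (ddown x) x"
proof -
  obtain S where S: "S \<subseteq> ddown x" "directed S" "is_sup S x"
    using assms unfolding continuous_poset_def is_basis_def by blast
  have cofinal: "\<exists>s\<in>S. a \<le> s" if "a \<in> ddown x" for a
    using that S unfolding ddown_def way_below_def by blast
  show "directed (ddown x)"
    using cofinal_subset_directed_iff[OF S(1) cofinal] S(2) by blast
  show "is_sup (ddown x) x"
    using cofinal_subset_is_sup_iff[OF S(1) cofinal] S(3) by blast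
qed

lemma ex_way_below:
  fixes x :: "'a::order"
  assumes "continuous_poset TYPE('a)"
  obtains a where "way_below a x"
  using directed_ddown[OF assms, of x] unfolding directed_def ddown_def by blast

text \<open>\<open>y\<close> is the supremum of the directed set of all \<open>a\<close> with \<open>a \<ll> c \<ll> y\<close> for some \<open>c\<close>.\<close>
lemma way_below_interpolate:
  fixes x y :: "'a::order"
  assumes cont: "continuous_poset TYPE('a)" and "way_below x y"
  obtains z where "way_below x z" "way_below z y"
proof -
  define D where "D = (\<Union>c\<in>ddown y. ddown c)"
  have "is_sup D y"
    unfolding D_def using is_sup_ddown[OF cont] by (intro is_sup_UN)
  moreover have "directed D"
    unfolding directed_def
  proof
    obtain c where "way_below c y"
      using ex_way_below[OF cont] .
    moreover obtain a where "way_below a c"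
      using ex_way_below[OF cont] .
    ultimately show "D \<noteq> {}"
      by (auto simp: D_def ddown_def)
  next
    show "\<forall>a1\<in>D. \<forall>a2\<in>D. \<exists>a\<in>D. a1 \<le> a \<and> a2 \<le> a"
    proof (intro ballI)
      fix a1 a2 assume "a1 \<in> D" "a2 \<in> D"
      then obtain c1 c2 where "c1 \<in> ddown y" "c2 \<in> ddown y" "a1 \<in> ddown c1" "a2 \<in> ddown c2"
        by (auto simp: D_def)
      moreover obtain c where c: "c \<in> ddown y" "c1 \<le> c" "c2 \<le> c"
        using directed_ddown[OF cont] calculation(1,2) unfolding directed_def by blast
      ultimately have "a1 \<in> ddown c" "a2 \<in> ddown c"
        by (auto simp: ddown_def intro: way_below_mono)
      then obtain a where "a \<in> ddown c" "a1 \<le> a" "a2 \<le> a"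
        using directed_ddown[OF cont] unfolding directed_def by blast
      with c(1) show "\<exists>a\<in>D. a1 \<le> a \<and> a2 \<le> a"
        by (auto simp: D_def)
    qed
  qed
  ultimately obtain d where "d \<in> D" "x \<le> d"
    using \<open>way_below x y\<close> unfolding way_below_def by blast
  then obtain c where "way_below x c" "way_below c y"
    by (auto simp: D_def ddown_def intro: way_below_mono)
  then show thesis
    by (rule that)
qed

lemma bicontinuous_imp_continuous_poset:
  "bicontinuous T \<Longrightarrow> continuous_poset T"
  by (simp add: bicontinuous_def)

lemma
  fixes x :: "'a::order"
  assumes "bicontinuous TYPE('a)"
  shows filtered_uup: "filtered (uup x)"
    and is_inf_uup: "is_inf (uup x) x"
  using assms unfolding bicontinuous_def by blast+

lemma ex_way_above:
  fixes x :: "'a::order"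
  assumes "bicontinuous TYPE('a)"
  obtains b where "way_below x b"
  using filtered_uup[OF assms, of x] unfolding filtered_def uup_def by blast

section \<open>The interval topology\<close>

lemma openin_open_interval: "openin interval_topology (open_interval a b)"
  unfolding interval_topology_def by (rule topology_generated_by_Basis) blast

lemma open_interval_mono:
  fixes a a' b b' :: "'a::order"
  shows "a \<le> a' \<Longrightarrow> b' \<le> b \<Longrightarrow> open_interval a' b' \<subseteq> open_interval a b"
  unfolding open_interval_def by (auto intro: way_below_mono)

lemma ex_open_interval_mem:
  fixes x :: "'a::order"
  assumes "bicontinuous TYPE('a)"
  obtains a b where "x \<in> open_interval a b"
proof -
  obtain a where "way_below a x"
    using ex_way_below[OF bicontinuous_imp_continuous_poset[OF assms]] .
  moreover obtain b where "way_below x b"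
    using ex_way_above[OF assms] .
  ultimately show thesis
    using that by (simp add: open_interval_def)
qed

lemma topspace_interval_topology:
  assumes "bicontinuous TYPE('a::order)"
  shows "topspace (interval_topology :: 'a topology) = UNIV"
proof -
  have "x \<in> \<Union>{open_interval a b | a b. True}" for x :: 'a
  proof -
    obtain a b where "x \<in> open_interval a b"
      using ex_open_interval_mem[OF assms] .
    then show ?thesis
      by blast
  qed
  then show ?thesis
    unfolding interval_topology_def topology_generated_by_topspace by blast
qed

lemma openin_interval_topology_ex_open_interval:
  fixes x :: "'a::order"
  assumes bic: "bicontinuous TYPE('a)" and "openin interval_topology U" and "x \<in> U"
  shows "\<exists>a b. x \<in> open_interval a b \<and> open_interval a b \<subseteq> U"
proof -
  have "generate_topology_on {open_interval a b | a b. True} U"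
    using assms(2) unfolding interval_topology_def openin_topology_generated_by_iff .
  then show ?thesis
    using \<open>x \<in> U\<close>
  proof (induction arbitrary: x)
    case Empty
    then show ?case by simp
  next
    case (Int U1 U2)
    obtain a1 b1 where 1: "x \<in> open_interval a1 b1" "open_interval a1 b1 \<subseteq> U1"
      using Int by blast
    obtain a2 b2 where 2: "x \<in> open_interval a2 b2" "open_interval a2 b2 \<subseteq> U2"
      using Int by blast
    obtain a where a: "way_below a x" "a1 \<le> a" "a2 \<le> a"
      using 1(1) 2(1) directed_ddown[OF bicontinuous_imp_continuous_poset[OF bic], of x]
      unfolding directed_def ddown_def open_interval_def by blast
    obtain b where b: "way_below x b" "b \<le> b1" "b \<le> b2"
      using 1(1) 2(1) filtered_uup[OF bic, of x]
      unfolding filtered_def uup_def open_interval_def by blast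
    have "open_interval a b \<subseteq> U1 \<inter> U2"
      using a b 1(2) 2(2) open_interval_mono by blast
    moreover have "x \<in> open_interval a b"
      using a b by (simp add: open_interval_def)
    ultimately show ?case
      by blast
  next
    case (UN K)
    then show ?case by blast
  next
    case (Basis s)
    then show ?case by blast
  qed
qed

lemma dense_obtain_way_below_between:
  fixes C :: "'a::order set"
  assumes bic: "bicontinuous TYPE('a)"
    and dense: "interval_topology closure_of C = topspace interval_topology"
    and "way_below a b"
  obtains c where "c \<in> C" "way_below a c" "way_below c b"
proof -
  obtain z where "z \<in> open_interval a b"
    using way_below_interpolate[OF bicontinuous_imp_continuous_poset[OF bic] \<open>way_below a b\<close>]
    by (auto simp: open_interval_def)
  moreover have "z \<in> interval_topology closure_of C"
    using dense topspace_interval_topology[OF bic] by simp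
  ultimately obtain c where "c \<in> C" "c \<in> open_interval a b"
    using openin_open_interval unfolding in_closure_of by blast
  then show thesis
    using that by (simp add: open_interval_def)
qed

lemma ex_dense_open_interval_subset:
  fixes C :: "'a::order set"
  assumes bic: "bicontinuous TYPE('a)"
    and dense: "interval_topology closure_of C = topspace interval_topology"
    and "openin interval_topology U" and "x \<in> U"
  shows "\<exists>V \<in> {open_interval a b | a b. a \<in> C \<and> b \<in> C \<and> way_below a b}. x \<in> V \<and> V \<subseteq> U"
proof -
  obtain a b where ab: "way_below a x" "way_below x b" "open_interval a b \<subseteq> U"
    using openin_interval_topology_ex_open_interval[OF bic assms(3,4)]
    by (auto simp: open_interval_def)
  obtain c where c: "c \<in> C" "way_below a c" "way_below c x"
    using dense_obtain_way_below_between[OF bic dense ab(1)] .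
  obtain d where d: "d \<in> C" "way_below x d" "way_below d b"
    using dense_obtain_way_below_between[OF bic dense ab(2)] .
  have "open_interval c d \<subseteq> U"
    using c d ab(3) open_interval_mono way_below_imp_le by blast
  moreover have "x \<in> open_interval c d" and "way_below c d"
    using c d way_below_trans by (auto simp: open_interval_def)
  ultimately show ?thesis
    using c d by blast
qed

lemma countable_open_intervals:
  fixes C :: "'a::order set"
  assumes "countable C"
  shows "countable {open_interval a b | a b. a \<in> C \<and> b \<in> C \<and> way_below a b}"
proof -
  have "{open_interval a b | a b. a \<in> C \<and> b \<in> C \<and> way_below a b}
          \<subseteq> (\<lambda>(a, b). open_interval a b) ` (C \<times> C)"
    by auto
  then show ?thesis
    by (rule countable_subset) (intro countable_image countable_SIGMA assms)
qed

lemma open_intervals_dense_countable_base: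
  fixes C :: "'a::order set"
  assumes "bicontinuous TYPE('a)" and "countable C"
    and "interval_topology closure_of C = topspace interval_topology"
  shows "countable {open_interval a b | a b. a \<in> C \<and> b \<in> C \<and> way_below a b} \<and>
         (\<forall>V \<in> {open_interval a b | a b. a \<in> C \<and> b \<in> C \<and> way_below a b}.
            openin interval_topology V) \<and>
         (\<forall>U x. openin interval_topology U \<and> x \<in> U \<longrightarrow>
            (\<exists>V \<in> {open_interval a b | a b. a \<in> C \<and> b \<in> C \<and> way_below a b}. x \<in> V \<and> V \<subseteq> U))"
proof (intro conjI allI impI ballI)
  show "countable {open_interval a b | a b. a \<in> C \<and> b \<in> C \<and> way_below a b}"
    using assms(2) by (rule countable_open_intervals)
  show "openin interval_topology V"
    if "V \<in> {open_interval a b | a b. a \<in> C \<and> b \<in> C \<and> way_below a b}" for V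
    using that by (auto simp: openin_open_interval)
  show "\<exists>V \<in> {open_interval a b | a b. a \<in> C \<and> b \<in> C \<and> way_below a b}. x \<in> V \<and> V \<subseteq> U"
    if "openin interval_topology U \<and> x \<in> U" for U x
    using that by (intro ex_dense_open_interval_subset[OF assms(1,3)]) auto
qed

lemma second_countable_interval_topology:
  fixes C :: "'a::order set"
  assumes "bicontinuous TYPE('a)" and "countable C"
    and "interval_topology closure_of C = topspace interval_topology"
  shows "second_countable (interval_topology :: 'a topology)"
  unfolding second_countable_def
  by (rule exI, rule open_intervals_dense_countable_base[OF assms])

lemma interval_topology_separation:
  fixes x y :: "'a::order"
  assumes bic: "bicontinuous TYPE('a)" and "\<not> x \<le> y"
  obtains U V where "openin interval_topology U" "openin interval_topology V"
    "x \<in> U" "y \<in> V" "disjnt U V"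
proof -
  have cont: "continuous_poset TYPE('a)"
    using bic by (rule bicontinuous_imp_continuous_poset)
  obtain a where a: "way_below a x" "\<not> a \<le> y"
    using is_sup_ddown[OF cont, of x] \<open>\<not> x \<le> y\<close> unfolding is_sup_def ddown_def by blast
  obtain b where b: "way_below y b" "\<not> a \<le> b"
    using is_inf_uup[OF bic, of y] a(2) unfolding is_inf_def uup_def by blast
  obtain b' where "way_below x b'"
    using ex_way_above[OF bic] .
  obtain a' where "way_below a' y"
    using ex_way_below[OF cont] .
  have "disjnt (open_interval a b') (open_interval a' b)"
    using b(2) way_below_trans way_below_imp_le unfolding disjnt_def open_interval_def by blast
  moreover have "x \<in> open_interval a b'" "y \<in> open_interval a' b"
    using a b \<open>way_below x b'\<close> \<open>way_below a' y\<close> by (auto simp: open_interval_def)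
  ultimately show thesis
    using that openin_open_interval by blast
qed

lemma Hausdorff_interval_topology:
  assumes "bicontinuous TYPE('a::order)"
  shows "Hausdorff_space (interval_topology :: 'a topology)"
  unfolding Hausdorff_space_def
proof (intro allI impI)
  fix x y :: 'a
  assume "x \<in> topspace interval_topology \<and> y \<in> topspace interval_topology \<and> x \<noteq> y"
  then consider "\<not> x \<le> y" | "\<not> y \<le> x"
    by fastforce
  then show "\<exists>U V. openin interval_topology U \<and> openin interval_topology V \<and>
                   x \<in> U \<and> y \<in> V \<and> disjnt U V"
  proof cases
    case 1
    then show ?thesis
      using interval_topology_separation[OF assms] by metis
  next
    case 2
    then show ?thesis
      using interval_topology_separation[OF assms] disjnt_sym by metis
  qed
qed

lemma locally_compact_interval_topology:
  assumes "globally_hyperbolic TYPE('a::order)"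
  shows "locally_compact_space (interval_topology :: 'a topology)"
  unfolding locally_compact_space_def
proof
  fix x :: 'a
  have "bicontinuous TYPE('a)"
    using assms by (simp add: globally_hyperbolic_def)
  then obtain a b where "x \<in> open_interval a b"
    by (rule ex_open_interval_mem)
  moreover have "compactin interval_topology {z. a \<le> z \<and> z \<le> b}"
    using assms by (simp add: globally_hyperbolic_def)
  moreover have "open_interval a b \<subseteq> {z. a \<le> z \<and> z \<le> b}"
    unfolding open_interval_def using way_below_imp_le by blast
  ultimately show "\<exists>U K. openin interval_topology U \<and> compactin interval_topology K \<and> x \<in> U \<and> U \<subseteq> K"
    using openin_open_interval by blast
qed

lemma completely_metrizable_interval_topology:
  assumes "globally_hyperbolic TYPE('a::order)"
    and "second_countable (interval_topology :: 'a topology)"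
  shows "completely_metrizable_space (interval_topology :: 'a topology)"
proof -
  have "bicontinuous TYPE('a)"
    using assms(1) by (simp add: globally_hyperbolic_def)
  then have "Hausdorff_space (interval_topology :: 'a topology)"
    by (rule Hausdorff_interval_topology)
  moreover have "locally_compact_space (interval_topology :: 'a topology)"
    using assms(1) by (rule locally_compact_interval_topology)
  ultimately have "metrizable_space (interval_topology :: 'a topology)"
    using assms(2) locally_compact_Hausdorff_imp_regular_space Hausdorff_imp_t1_space
      regular_second_countable_imp_metrizable_space by blast
  then show ?thesis
    using \<open>locally_compact_space interval_topology\<close>
    by (rule locally_compact_imp_completely_metrizable_space)
qed

lemma
  fixes C :: "'a::order set" and x :: 'a
  assumes bic: "bicontinuous TYPE('a)"
    and dense: "interval_topology closure_of C = topspace interval_topology"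
  shows directed_ddown_inter_dense: "directed (ddown x \<inter> C)"
    and is_sup_ddown_inter_dense: "is_sup (ddown x \<inter> C) x"
proof -
  have cont: "continuous_poset TYPE('a)"
    using bic by (rule bicontinuous_imp_continuous_poset)
  have cofinal: "\<exists>c\<in>ddown x \<inter> C. a \<le> c" if a: "a \<in> ddown x" for a
  proof -
    obtain c where "c \<in> C" "way_below a c" "way_below c x"
      using dense_obtain_way_below_between[OF bic dense] a by (auto simp: ddown_def)
    then show ?thesis
      by (auto simp: ddown_def dest: way_below_imp_le)
  qed
  show "directed (ddown x \<inter> C)"
    using cofinal_subset_directed_iff[OF _ cofinal] directed_ddown[OF cont] by blast
  show "is_sup (ddown x \<inter> C) x"
    using cofinal_subset_is_sup_iff[OF _ cofinal] is_sup_ddown[OF cont] by blast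
qed

lemma
  fixes C :: "'a::order set" and x :: 'a
  assumes bic: "bicontinuous TYPE('a)"
    and dense: "interval_topology closure_of C = topspace interval_topology"
  shows filtered_uup_inter_dense: "filtered (uup x \<inter> C)"
    and is_inf_uup_inter_dense: "is_inf (uup x \<inter> C) x"
proof -
  have coinitial: "\<exists>c\<in>uup x \<inter> C. c \<le> b" if b: "b \<in> uup x" for b
  proof -
    obtain c where "c \<in> C" "way_below x c" "way_below c b"
      using dense_obtain_way_below_between[OF bic dense] b by (auto simp: uup_def)
    then show ?thesis
      by (auto simp: uup_def dest: way_below_imp_le)
  qed
  show "filtered (uup x \<inter> C)"
    using coinitial_subset_filtered_iff[OF _ coinitial] filtered_uup[OF bic] by blast
  show "is_inf (uup x \<inter> C) x"
    using coinitial_subset_is_inf_iff[OF _ coinitial] is_inf_uup[OF bic] by blast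
qed

theorem mainTheorem2:
  fixes C :: "'a::order set"
  assumes bic: "bicontinuous TYPE('a)"
    and cnt: "countable C"
    and dense: "interval_topology closure_of C = topspace interval_topology"
  shows "(countable {open_interval a b | a b. a \<in> C \<and> b \<in> C \<and> way_below a b} \<and>
          (\<forall>V \<in> {open_interval a b | a b. a \<in> C \<and> b \<in> C \<and> way_below a b}.
              openin interval_topology V) \<and>
          (\<forall>U x. openin interval_topology U \<and> x \<in> U \<longrightarrow>
              (\<exists>V \<in> {open_interval a b | a b. a \<in> C \<and> b \<in> C \<and> way_below a b}.
                  x \<in> V \<and> V \<subseteq> U)))
       \<and> (separable_space (interval_topology :: 'a topology) \<longrightarrow>
            second_countable (interval_topology :: 'a topology))
       \<and> (globally_hyperbolic TYPE('a) \<longrightarrow>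
            completely_metrizable_space (interval_topology :: 'a topology))
       \<and> (\<forall>x. (\<exists>S. S \<subseteq> ddown x \<inter> C \<and> directed S \<and> is_sup S x) \<and>
               (\<exists>S. S \<subseteq> uup x \<inter> C \<and> filtered S \<and> is_inf S x))"
proof (intro conjI[OF open_intervals_dense_countable_base[OF bic cnt dense]] conjI allI impI)
  show "second_countable (interval_topology :: 'a topology)"
    if "separable_space (interval_topology :: 'a topology)"
    using that second_countable_interval_topology[OF bic] unfolding separable_space_def by blast
  show "completely_metrizable_space (interval_topology :: 'a topology)"
    if "globally_hyperbolic TYPE('a)"
    using that second_countable_interval_topology[OF bic cnt dense]
    by (rule completely_metrizable_interval_topology)
  show "\<exists>S. S \<subseteq> ddown x \<inter> C \<and> directed S \<and> is_sup S x" for x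
    using directed_ddown_inter_dense[OF bic dense] is_sup_ddown_inter_dense[OF bic dense] by blast
  show "\<exists>S. S \<subseteq> uup x \<inter> C \<and> filtered S \<and> is_inf S x" for x
    using filtered_uup_inter_dense[OF bic dense] is_inf_uup_inter_dense[OF bic dense] by blast
qed

end
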